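(* For every integer $n\geq 5$, there is a graph homomorphism $h: M(G_{n-1}) \to G_n$. In particular, $\chi(G_n)\geq n-2$.
   Context: Let $[n]=\{1,\dots,n\}$. A $2$-subset $\{a,b\}$ of $[n]$ with $a<b$ is called stable if $b \neq a+1$ and $\{a,b\}\neq\{1,n\}$; it is written $ab$. For $n\ge 4$, the graph $G_n$ has as vertex set all stable $2$-subsets of $[n]$; two vertices $ab$ ($a<b$) and $cd$ ($c<d$) with $a<c$ are adjacent iff $\{a,b\}\cap\{c,d\}=\emptyset$ and either $a<c<b<d$, or $1<a<c<d<b$. For a graph $G=(V,E)$, the Mycielskian $M(G)$ has vertex set $V\cup\{\bar u : u\in V\}\cup\{*\}$ (with $\bar u$ new vertices called clones and $*$ a new vertex), and edges $\{u,v\}$ and $\{u,\bar v\}$ for every $\{u,v\}\in E$, and $\{\bar u,*\}$ for every $u\in V$. A homomorphism is a map on vertices sending edges to edges. $\chi$ denotes chromatic number. *)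

theory Defs
  imports Main
begin

text \<open>Simple graphs are given by a vertex set V and a symmetric edge relation E
  (only its restriction to V matters).\<close>

definition graph_hom ::
  "'a set \<Rightarrow> ('a \<Rightarrow> 'a \<Rightarrow> bool) \<Rightarrow> 'b set \<Rightarrow> ('b \<Rightarrow> 'b \<Rightarrow> bool) \<Rightarrow> ('a \<Rightarrow> 'b) \<Rightarrow> bool" where
  "graph_hom V1 E1 V2 E2 h \<longleftrightarrow>
     (\<forall>x\<in>V1. h x \<in> V2) \<and> (\<forall>x\<in>V1. \<forall>y\<in>V1. E1 x y \<longrightarrow> E2 (h x) (h y))"

definition proper_colouring :: "'a set \<Rightarrow> ('a \<Rightarrow> 'a \<Rightarrow> bool) \<Rightarrow> nat \<Rightarrow> ('a \<Rightarrow> nat) \<Rightarrow> bool" where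
  "proper_colouring V E k c \<longleftrightarrow>
     (\<forall>x\<in>V. c x < k) \<and> (\<forall>x\<in>V. \<forall>y\<in>V. E x y \<longrightarrow> c x \<noteq> c y)"

definition chromatic_number :: "'a set \<Rightarrow> ('a \<Rightarrow> 'a \<Rightarrow> bool) \<Rightarrow> nat" where
  "chromatic_number V E = (LEAST k. \<exists>c. proper_colouring V E k c)"

text \<open>Stable 2-subsets {a,b}, a<b, of [n], encoded as the pair (a,b).\<close>
definition stable :: "nat \<Rightarrow> nat \<times> nat \<Rightarrow> bool" where
  "stable n p \<longleftrightarrow> (case p of (a, b) \<Rightarrow>
     1 \<le> a \<and> a < b \<and> b \<le> n \<and> b \<noteq> a + 1 \<and> \<not> (a = 1 \<and> b = n))"

definition G_verts :: "nat \<Rightarrow> (nat \<times> nat) set" where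
  "G_verts n = {p. stable n p}"

definition cross :: "nat \<times> nat \<Rightarrow> nat \<times> nat \<Rightarrow> bool" where
  "cross p q \<longleftrightarrow> (case p of (a, b) \<Rightarrow> case q of (c, d) \<Rightarrow>
     a < c \<and> {a, b} \<inter> {c, d} = {} \<and>
     ((a < c \<and> c < b \<and> b < d) \<or> (1 < a \<and> a < c \<and> c < d \<and> d < b)))"

definition G_adj :: "nat \<Rightarrow> nat \<times> nat \<Rightarrow> nat \<times> nat \<Rightarrow> bool" where
  "G_adj n p q \<longleftrightarrow> p \<in> G_verts n \<and> q \<in> G_verts n \<and> (cross p q \<or> cross q p)"

datatype 'a myc = Orig 'a | Clone 'a | Star

definition myc_verts :: "'a set \<Rightarrow> 'a myc set" where
  "myc_verts V = Orig ` V \<union> Clone ` V \<union> {Star}"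

fun myc_adj :: "('a \<Rightarrow> 'a \<Rightarrow> bool) \<Rightarrow> 'a myc \<Rightarrow> 'a myc \<Rightarrow> bool" where
  "myc_adj E (Orig u) (Orig v) = E u v"
| "myc_adj E (Orig u) (Clone v) = E u v"
| "myc_adj E (Clone u) (Orig v) = E u v"
| "myc_adj E (Clone u) Star = True"
| "myc_adj E Star (Clone u) = True"
| "myc_adj E _ _ = False"

end

theory Submission
  imports Defs
begin

text \<open>The homomorphism M(G_n) \<rightarrow> G_(n+1) is the identity on G_n, sends the star to 1n, and
  sends the clone of ab to x(n+1), where x = a, or x = b if a = 1. A pair x(n+1) is adjacent
  in G_(n+1) to a stable pair ab of [n] exactly when x \<notin> {a, b} and either a < x < b or
  1 < x < a, and every neighbour of ab in G_n satisfies this for the chosen x. Since a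
  k-colouring of a Mycielskian yields a (k-1)-colouring of the graph, induction starting from
  the edge 13 -- 24 of G_4 gives the bound on the chromatic number.\<close>

lemma proper_colouring_comp_graph_hom:
  assumes "graph_hom V1 E1 V2 E2 h" and "proper_colouring V2 E2 k c"
  shows "proper_colouring V1 E1 k (c \<circ> h)"
  using assms unfolding graph_hom_def proper_colouring_def by auto

lemma proper_colouring_omit_colour:
  assumes "proper_colouring V E k c" and "s < k" and "\<forall>x\<in>V. c x \<noteq> s"
  shows "proper_colouring V E (k - 1) (\<lambda>x. if c x < s then c x else c x - 1)"
  unfolding proper_colouring_def
proof (intro conjI ballI impI)
  fix x assume "x \<in> V"
  then have "c x < k" "c x \<noteq> s"
    using assms unfolding proper_colouring_def by auto
  then show "(if c x < s then c x else c x - 1) < k - 1"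
    using \<open>s < k\<close> by auto
next
  fix x y assume "x \<in> V" "y \<in> V" "E x y"
  then have "c x \<noteq> c y" "c x \<noteq> s" "c y \<noteq> s"
    using assms unfolding proper_colouring_def by auto
  then show "(if c x < s then c x else c x - 1) \<noteq> (if c y < s then c y else c y - 1)"
    by auto
qed

lemma proper_colouring_of_mycielskian:
  assumes col: "proper_colouring (myc_verts V) (myc_adj E) k c"
  shows "\<exists>c'. proper_colouring V E (k - 1) c'"
proof -
  have colour_lt: "c z < k" if "z \<in> myc_verts V" for z
    using col that unfolding proper_colouring_def by blast
  have colour_ne: "c z \<noteq> c w" if "z \<in> myc_verts V" "w \<in> myc_verts V" "myc_adj E z w" for z w
    using col that unfolding proper_colouring_def by blast
  have Orig: "Orig x \<in> myc_verts V" and Clone: "Clone x \<in> myc_verts V" if "x \<in> V" for x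
    using that unfolding myc_verts_def by auto
  have Star: "Star \<in> myc_verts V"
    unfolding myc_verts_def by auto
  \<comment> \<open>Vertices sharing the star's colour take their clone's colour; the star's colour then
    disappears from V.\<close>
  define d where "d x = (if c (Orig x) = c Star then c (Clone x) else c (Orig x))" for x
  have "proper_colouring V E k d"
    unfolding proper_colouring_def
  proof (intro conjI ballI impI)
    show "d x < k" if "x \<in> V" for x
      using colour_lt[OF Orig[OF that]] colour_lt[OF Clone[OF that]] unfolding d_def by simp
    show "d x \<noteq> d y" if "x \<in> V" "y \<in> V" "E x y" for x y
    proof -
      have "c (Orig x) \<noteq> c (Orig y)" "c (Clone x) \<noteq> c (Orig y)" "c (Orig x) \<noteq> c (Clone y)"
        using colour_ne Orig Clone that by simp_all
      then show ?thesis
        unfolding d_def by auto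
    qed
  qed
  moreover have "\<forall>x\<in>V. d x \<noteq> c Star"
    using colour_ne[OF Clone Star] unfolding d_def by simp
  ultimately show ?thesis
    using proper_colouring_omit_colour colour_lt[OF Star] by blast
qed

lemma proper_colouring_card:
  assumes "finite V" and "\<forall>x\<in>V. \<not> E x x"
  shows "\<exists>c. proper_colouring V E (card V) c"
proof -
  obtain c where "bij_betw c V {0..<card V}"
    using ex_bij_betw_finite_nat[OF assms(1)] by blast
  then have "proper_colouring V E (card V) c"
    using assms(2) unfolding proper_colouring_def bij_betw_def inj_on_def by auto
  then show ?thesis by blast
qed

lemma le_chromatic_number:
  assumes "proper_colouring V E k c" and "\<And>k c. proper_colouring V E k c \<Longrightarrow> m \<le> k"
  shows "m \<le> chromatic_number V E"
proof -
  have "\<exists>c. proper_colouring V E (chromatic_number V E) c"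
    unfolding chromatic_number_def by (rule LeastI) (use assms(1) in blast)
  then show ?thesis
    using assms(2) by blast
qed

lemma stable_iff:
  "stable n (a, b) \<longleftrightarrow> 1 \<le> a \<and> a < b \<and> b \<le> n \<and> b \<noteq> a + 1 \<and> \<not> (a = 1 \<and> b = n)"
  unfolding stable_def by simp

lemma cross_iff:
  "cross (a, b) (c, d) \<longleftrightarrow> a < c \<and> a \<noteq> d \<and> b \<noteq> c \<and> b \<noteq> d \<and>
     (c < b \<and> b < d \<or> 1 < a \<and> c < d \<and> d < b)"
  unfolding cross_def by auto

lemma stable_Suc: "stable n p \<Longrightarrow> stable (Suc n) p"
  unfolding stable_def by (auto split: prod.splits)

lemma G_adj_Suc: "G_adj n p q \<Longrightarrow> G_adj (Suc n) p q"
  unfolding G_adj_def G_verts_def using stable_Suc by blast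

lemma G_adj_sym: "G_adj n p q \<Longrightarrow> G_adj n q p"
  unfolding G_adj_def by blast

lemma G_adj_irrefl: "\<not> G_adj n p p"
  unfolding G_adj_def cross_def by auto

lemma finite_G_verts: "finite (G_verts n)"
proof (rule finite_subset)
  show "G_verts n \<subseteq> {..n} \<times> {..n}"
    unfolding G_verts_def stable_def by auto
qed simp

fun myc_hom :: "nat \<Rightarrow> (nat \<times> nat) myc \<Rightarrow> nat \<times> nat" where
  "myc_hom n (Orig p) = p"
| "myc_hom n (Clone (a, b)) = (if a = 1 then (b, Suc n) else (a, Suc n))"
| "myc_hom n Star = (1, n)"

lemma cross_last_iff:
  assumes "a < b" and "b \<le> n"
  shows "cross (a, b) (x, Suc n) \<or> cross (x, Suc n) (a, b) \<longleftrightarrow>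
    x \<noteq> a \<and> x \<noteq> b \<and> (a < x \<and> x < b \<or> 1 < x \<and> x < a)"
  using assms unfolding cross_iff by auto

lemma cross_myc_hom_Clone:
  assumes "stable n (a, b)" and "stable n (c, d)" and "cross (a, b) (c, d) \<or> cross (c, d) (a, b)"
  shows "cross (a, b) (myc_hom n (Clone (c, d))) \<or> cross (myc_hom n (Clone (c, d))) (a, b)"
proof (cases "c = 1")
  case True
  with assms have "1 < a \<and> a < d \<and> d < b"
    unfolding cross_iff stable_iff by auto
  with True assms(1) show ?thesis
    by (simp add: cross_last_iff stable_iff)
next
  case False
  with assms have "c \<noteq> a \<and> c \<noteq> b \<and> (a < c \<and> c < b \<or> 1 < c \<and> c < a)"
    unfolding cross_iff stable_iff by auto
  with False assms(1) show ?thesis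
    by (simp add: cross_last_iff stable_iff)
qed

lemma myc_hom_Clone_in_G_verts: "v \<in> G_verts n \<Longrightarrow> myc_hom n (Clone v) \<in> G_verts (Suc n)"
  unfolding G_verts_def stable_def by (auto split: prod.splits)

lemma G_adj_myc_hom_Clone: "G_adj n u v \<Longrightarrow> G_adj (Suc n) u (myc_hom n (Clone v))"
  using cross_myc_hom_Clone[of n "fst u" "snd u" "fst v" "snd v"] stable_Suc myc_hom_Clone_in_G_verts
  unfolding G_adj_def G_verts_def by auto

lemma G_adj_myc_hom_Clone_Star:
  "v \<in> G_verts n \<Longrightarrow> G_adj (Suc n) (myc_hom n (Clone v)) (myc_hom n Star)"
  using myc_hom_Clone_in_G_verts[of v n]
  unfolding G_adj_def G_verts_def stable_def cross_def by (auto split: prod.splits)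

lemma graph_hom_myc_hom:
  assumes "3 \<le> n"
  shows "graph_hom (myc_verts (G_verts n)) (myc_adj (G_adj n)) (G_verts (Suc n)) (G_adj (Suc n))
    (myc_hom n)"
  unfolding graph_hom_def
proof (intro conjI ballI impI)
  fix x assume "x \<in> myc_verts (G_verts n)"
  moreover have "myc_hom n Star \<in> G_verts (Suc n)"
    using assms unfolding G_verts_def stable_def by auto
  ultimately show "myc_hom n x \<in> G_verts (Suc n)"
    using stable_Suc myc_hom_Clone_in_G_verts
    unfolding myc_verts_def G_verts_def by auto
next
  fix x y assume "x \<in> myc_verts (G_verts n)" "y \<in> myc_verts (G_verts n)"
    and "myc_adj (G_adj n) x y"
  then show "G_adj (Suc n) (myc_hom n x) (myc_hom n y)"
  proof (induction "G_adj n" x y rule: myc_adj.induct)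
    case (1 u v)
    then show ?case by (simp add: G_adj_Suc)
  next
    case (2 u v)
    then show ?case using G_adj_myc_hom_Clone by simp
  next
    case (3 u v)
    then show ?case using G_adj_sym[OF G_adj_myc_hom_Clone[OF G_adj_sym]] by simp
  next
    case (4 u)
    then have "u \<in> G_verts n"
      by (auto simp: myc_verts_def)
    then show ?case
      using G_adj_myc_hom_Clone_Star by simp
  next
    case (5 u)
    then have "u \<in> G_verts n"
      by (auto simp: myc_verts_def)
    then show ?case
      using G_adj_sym[OF G_adj_myc_hom_Clone_Star] by simp
  qed simp_all
qed

lemma proper_colouring_G_lower_bound:
  assumes "4 \<le> n" and "proper_colouring (G_verts n) (G_adj n) k c"
  shows "n - 2 \<le> k"
  using assms
proof (induction n arbitrary: k c rule: dec_induct)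
  case base
  have "(1, 3) \<in> G_verts 4" "(2, 4) \<in> G_verts 4" "G_adj 4 (1, 3) (2, 4)"
    unfolding G_adj_def G_verts_def stable_def cross_def by auto
  then have "c (1, 3) \<noteq> c (2, 4)" "c (1, 3) < k" "c (2, 4) < k"
    using base unfolding proper_colouring_def by blast+
  then show ?case by simp
next
  case (step n)
  have "proper_colouring (myc_verts (G_verts n)) (myc_adj (G_adj n)) k (c \<circ> myc_hom n)"
    using proper_colouring_comp_graph_hom[OF graph_hom_myc_hom step.prems] step.hyps by simp
  then obtain c' where "proper_colouring (G_verts n) (G_adj n) (k - 1) c'"
    using proper_colouring_of_mycielskian by blast
  then have "n - 2 \<le> k - 1"
    by (rule step.IH)
  with step.hyps show ?case
    by linarith
qed

theorem lemma3:
  fixes n :: nat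
  assumes "n \<ge> 5"
  shows "(\<exists>h. graph_hom (myc_verts (G_verts (n - 1))) (myc_adj (G_adj (n - 1)))
                          (G_verts n) (G_adj n) h)
         \<and> n - 2 \<le> chromatic_number (G_verts n) (G_adj n)"
proof
  obtain m where m: "n = Suc m"
    using assms by (cases n) simp_all
  have "graph_hom (myc_verts (G_verts (n - 1))) (myc_adj (G_adj (n - 1))) (G_verts n) (G_adj n)
      (myc_hom (n - 1))"
    using assms unfolding m by (simp add: graph_hom_myc_hom)
  then show "\<exists>h. graph_hom (myc_verts (G_verts (n - 1))) (myc_adj (G_adj (n - 1)))
      (G_verts n) (G_adj n) h"
    by auto
  obtain c where "proper_colouring (G_verts n) (G_adj n) (card (G_verts n)) c"
    using proper_colouring_card[OF finite_G_verts] G_adj_irrefl by blast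
  moreover have "n - 2 \<le> k" if "proper_colouring (G_verts n) (G_adj n) k c" for k c
    using proper_colouring_G_lower_bound[OF _ that] assms by simp
  ultimately show "n - 2 \<le> chromatic_number (G_verts n) (G_adj n)"
    by (rule le_chromatic_number)
qed

end
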